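(* Let $n\ge1$, $0\le p\le n$, $r>0$, and let $u:\Delta^n_p(r)\to[0,\infty]$ be a convex function. Then for every $r'$ with $\frac{r}{2}\le r'<r$ and every $x\in\Delta^n_p(r')$ with $x_1,\dots,x_p>0$, \[ u(x)\le\frac{(r')^p}{(r-r')^n}\int_{\Delta^n_p(r)}u\,d\mathbf{x}\cdot\frac{1}{\prod_{i=1}^p x_i}. \]
   Context: For $r>0$ and $0\le p\le n$, $\Delta^n_p(r):=\{x\in[0,\infty)^p\times(-r,r)^{n-p}\;:\;\sum_{i=1}^p x_i<r\}\subset\mathbb{R}^n$. $d\mathbf{x}$ is the $n$-dimensional Lebesgue measure. Convexity of $[0,\infty]$-valued functions is meant with the usual conventions for $+\infty$. *)

theory Defs
  imports "HOL-Analysis.Analysis"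
begin

text \<open>The domain Delta^n_p(r) in R^n = real^'n, where the p "nonnegative" coordinates
  form the index set P (card P = p) and the remaining n - p coordinates lie in (-r,r).\<close>
definition Delta :: "'n::finite set \<Rightarrow> real \<Rightarrow> (real^'n) set" where
  "Delta P r = {x. (\<forall>i\<in>P. 0 \<le> x$i) \<and> (\<forall>i\<in>-P. -r < x$i \<and> x$i < r) \<and> (\<Sum>i\<in>P. x$i) < r}"

text \<open>Convexity of a [0,\<infinity>]-valued function (ennreal arithmetic, 0 * \<infinity> = 0).\<close>
definition convex_on_ennreal :: "'a::real_vector set \<Rightarrow> ('a \<Rightarrow> ennreal) \<Rightarrow> bool" where
  "convex_on_ennreal S f \<longleftrightarrow> convex S \<and>
     (\<forall>x\<in>S. \<forall>y\<in>S. \<forall>t::real. 0 \<le> t \<and> t \<le> 1 \<longrightarrow>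
        f ((1 - t) *\<^sub>R x + t *\<^sub>R y) \<le> ennreal (1 - t) * f x + ennreal t * f y)"

end

theory Submission
  imports Defs
begin

text \<open>Midpoint convexity gives \<open>u x \<le> (u (x + h) + u (x - h)) / 2\<close>; integrating over \<open>h\<close> in a
  box \<open>B\<close> symmetric about \<open>0\<close> with \<open>x + B \<subseteq> Delta P r\<close> yields \<open>u x * vol B \<le> \<integral>\<^sup>+ y \<in> Delta P r. u y\<close>.
  The box with half-widths \<open>(r - r') x\<^sub>i / r'\<close> for \<open>i \<in> P\<close> and \<open>r - r'\<close> otherwise fits:
  \<open>r' \<ge> r / 2\<close> keeps the \<open>P\<close>-coordinates nonnegative, and their sum stays below
  \<open>(1 + (r - r') / r') r' = r\<close>. Its volume is \<open>2\<^sup>n (r - r')\<^sup>n (\<Prod>i\<in>P. x\<^sub>i) / r'\<^sup>p\<close>.\<close>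

lemma
  fixes f :: "'a::euclidean_space \<Rightarrow> ennreal" and c :: real
  assumes f: "f \<in> borel_measurable lebesgue" and c: "c \<noteq> 0"
  shows nn_integral_lebesgue_affine:
      "(\<integral>\<^sup>+y. f y \<partial>lebesgue) = ennreal (\<bar>c\<bar> ^ DIM('a)) * (\<integral>\<^sup>+h. f (a + c *\<^sub>R h) \<partial>lebesgue)"
    and borel_measurable_lebesgue_affine:
      "(\<lambda>h. f (a + c *\<^sub>R h)) \<in> borel_measurable lebesgue"
proof -
  have T: "(\<lambda>h. a + (\<Sum>j\<in>Basis. (c * (h \<bullet> j)) *\<^sub>R j)) = (\<lambda>h. a + c *\<^sub>R h)"
    by (simp add: scaleR_sum_right[symmetric] euclidean_representation flip: scaleR_scaleR)
  have meas: "(\<lambda>h. a + c *\<^sub>R h) \<in> lebesgue \<rightarrow>\<^sub>M lebesgue"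
    using lebesgue_affine_measurable[of "\<lambda>_. c" a] c unfolding T by simp
  then show "(\<lambda>h. f (a + c *\<^sub>R h)) \<in> borel_measurable lebesgue"
    by (rule measurable_compose[OF _ f])
  have "lebesgue
      = density (distr lebesgue lebesgue (\<lambda>h. a + c *\<^sub>R h)) (\<lambda>_. ennreal (\<bar>c\<bar> ^ DIM('a)))"
    using lebesgue_affine_euclidean[of "\<lambda>_. c" a] c unfolding T by simp
  then have "(\<integral>\<^sup>+y. f y \<partial>lebesgue)
      = (\<integral>\<^sup>+y. ennreal (\<bar>c\<bar> ^ DIM('a)) * f y \<partial>distr lebesgue lebesgue (\<lambda>h. a + c *\<^sub>R h))"
    using f by (metis nn_integral_density[of "\<lambda>_. ennreal (\<bar>c\<bar> ^ DIM('a))"]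
        borel_measurable_const measurable_distr_eq1)
  also have "\<dots> = ennreal (\<bar>c\<bar> ^ DIM('a)) * (\<integral>\<^sup>+h. f (a + c *\<^sub>R h) \<partial>lebesgue)"
    using f meas by (simp add: nn_integral_distr nn_integral_cmult)
  finally show "(\<integral>\<^sup>+y. f y \<partial>lebesgue)
      = ennreal (\<bar>c\<bar> ^ DIM('a)) * (\<integral>\<^sup>+h. f (a + c *\<^sub>R h) \<partial>lebesgue)" .
qed

lemma convex_on_ennrealD:
  assumes "convex_on_ennreal S f" and "x \<in> S" and "y \<in> S" and "0 \<le> t" and "t \<le> 1"
  shows "f ((1 - t) *\<^sub>R x + t *\<^sub>R y) \<le> ennreal (1 - t) * f x + ennreal t * f y"
  using assms unfolding convex_on_ennreal_def by blast

lemma convex_on_ennreal_midpoint: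
  assumes "convex_on_ennreal S u" and "a - h \<in> S" and "a + h \<in> S"
  shows "u a \<le> ennreal (1/2) * u (a - h) + ennreal (1/2) * u (a + h)"
proof -
  have "(1 - 1/2::real) *\<^sub>R (a - h) + (1/2::real) *\<^sub>R (a + h) = a"
    by (simp add: scaleR_2 flip: scaleR_add_right)
  moreover have "u ((1 - 1/2::real) *\<^sub>R (a - h) + (1/2::real) *\<^sub>R (a + h))
      \<le> ennreal (1 - 1/2) * u (a - h) + ennreal (1/2) * u (a + h)"
    using assms by (intro convex_on_ennrealD) auto
  ultimately show ?thesis by simp
qed

lemma convex_on_ennreal_sublevel_convex:
  assumes "convex_on_ennreal S u"
  shows "convex {y\<in>S. u y \<le> c}"
  unfolding convex_alt
proof (intro ballI allI impI)
  fix y z and t :: real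
  assume y: "y \<in> {y\<in>S. u y \<le> c}" and z: "z \<in> {y\<in>S. u y \<le> c}" and t: "0 \<le> t \<and> t \<le> 1"
  have "u ((1 - t) *\<^sub>R y + t *\<^sub>R z) \<le> ennreal (1 - t) * u y + ennreal t * u z"
    using assms y z t by (intro convex_on_ennrealD) auto
  also have "\<dots> \<le> ennreal (1 - t) * c + ennreal t * c"
    using y z by (intro add_mono mult_left_mono) auto
  also have "\<dots> = c"
    using t by (simp flip: distrib_right ennreal_plus)
  finally show "(1 - t) *\<^sub>R y + t *\<^sub>R z \<in> {y\<in>S. u y \<le> c}"
    using assms y z t by (auto simp: convex_on_ennreal_def convex_alt)
qed

lemma convex_on_ennreal_borel_measurable:
  fixes u :: "'a::euclidean_space \<Rightarrow> ennreal"
  assumes cv: "convex_on_ennreal S u" and "bounded S"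
  shows "(\<lambda>y. u y * indicator S y) \<in> borel_measurable lebesgue"
proof (rule borel_measurableI_le)
  fix c :: ennreal
  have "{y\<in>S. u y \<le> c} \<in> sets lebesgue"
    using convex_on_ennreal_sublevel_convex[OF cv] \<open>bounded S\<close>
    by (intro fmeasurableD measurable_convex) (auto intro: bounded_subset)
  moreover have "S \<in> sets lebesgue"
    using cv \<open>bounded S\<close> by (intro fmeasurableD measurable_convex) (simp_all add: convex_on_ennreal_def)
  ultimately have "{y\<in>S. u y \<le> c} \<union> (space lebesgue - S) \<in> sets lebesgue"
    by (intro sets.Un sets.compl_sets)
  also have "{y\<in>S. u y \<le> c} \<union> (space lebesgue - S) = {y \<in> space lebesgue. u y * indicator S y \<le> c}"
    by (auto simp: indicator_def)
  finally show "{y \<in> space lebesgue. u y * indicator S y \<le> c} \<in> sets lebesgue" .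
qed

lemma convex_on_ennreal_mult_emeasure_le_nn_integral:
  fixes u :: "'a::euclidean_space \<Rightarrow> ennreal"
  assumes cv: "convex_on_ennreal S u"
    and meas: "(\<lambda>y. u y * indicator S y) \<in> borel_measurable lebesgue"
    and B: "B \<in> sets lebesgue" and sym: "\<And>h. h \<in> B \<Longrightarrow> - h \<in> B"
    and sub: "\<And>h. h \<in> B \<Longrightarrow> a + h \<in> S"
  shows "u a * emeasure lebesgue B \<le> (\<integral>\<^sup>+y\<in>S. u y \<partial>lebesgue)"
proof -
  define f where "f = (\<lambda>y. u y * indicator S y)"
  have f: "f \<in> borel_measurable lebesgue"
    using meas by (simp add: f_def)
  have shifted_measurable:
      "(\<lambda>h. f (a + h)) \<in> borel_measurable lebesgue" "(\<lambda>h. f (a - h)) \<in> borel_measurable lebesgue"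
    using borel_measurable_lebesgue_affine[OF f, of 1 a] borel_measurable_lebesgue_affine[OF f, of "-1" a]
    by simp_all
  have shifted_integral: "(\<integral>\<^sup>+h. f (a + h) \<partial>lebesgue) = (\<integral>\<^sup>+y. f y \<partial>lebesgue)"
      "(\<integral>\<^sup>+h. f (a - h) \<partial>lebesgue) = (\<integral>\<^sup>+y. f y \<partial>lebesgue)"
    using nn_integral_lebesgue_affine[OF f, of 1 a] nn_integral_lebesgue_affine[OF f, of "-1" a]
    by simp_all
  have pointwise: "u a * indicator B h
      \<le> ennreal (1/2) * f (a + h) + ennreal (1/2) * f (a - h)" for h
  proof (cases "h \<in> B")
    case True
    then have "a + h \<in> S" and "a - h \<in> S"
      using sub[of h] sub[of "- h"] sym[of h] by auto
    with convex_on_ennreal_midpoint[OF cv] show ?thesis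
      using \<open>h \<in> B\<close> by (simp add: f_def add.commute)
  qed simp
  have "u a * emeasure lebesgue B = (\<integral>\<^sup>+h. u a * indicator B h \<partial>lebesgue)"
    using B by (simp add: nn_integral_cmult_indicator)
  also have "\<dots> \<le> (\<integral>\<^sup>+h. ennreal (1/2) * f (a + h) + ennreal (1/2) * f (a - h) \<partial>lebesgue)"
    using pointwise by (intro nn_integral_mono) auto
  also have "\<dots> = ennreal (1/2) * (\<integral>\<^sup>+y. f y \<partial>lebesgue) + ennreal (1/2) * (\<integral>\<^sup>+y. f y \<partial>lebesgue)"
    using shifted_measurable by (simp add: nn_integral_add nn_integral_cmult shifted_integral)
  also have "\<dots> = (ennreal (1/2) + ennreal (1/2)) * (\<integral>\<^sup>+y. f y \<partial>lebesgue)"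
    by (simp only: distrib_right)
  also have "\<dots> = (\<integral>\<^sup>+y\<in>S. u y \<partial>lebesgue)"
    by (subst ennreal_plus[symmetric]) (auto simp: f_def)
  finally show ?thesis .
qed

lemma emeasure_lebesgue_cbox_cart_symmetric:
  fixes c :: "real^'n"
  assumes "\<And>i. 0 \<le> c$i"
  shows "emeasure lebesgue (cbox (- c) c) = ennreal (\<Prod>i\<in>UNIV. 2 * c$i)"
proof -
  have "cbox (- c) c \<noteq> {}"
    using assms by (auto simp: interval_ne_empty_cart)
  then show ?thesis
    by (simp add: emeasure_eq_measure2 content_cbox_cart)
qed

lemma ennreal_le_divide_of_mult_le:
  fixes a b :: ennreal
  assumes "a * ennreal v \<le> b" and "0 < w" and "w \<le> v"
  shows "a \<le> ennreal (1 / w) * b"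
proof -
  have "a = a * ennreal (w * (1 / w))"
    using \<open>0 < w\<close> by simp
  also have "\<dots> \<le> a * ennreal (v * (1 / w))"
    using assms by (intro mult_left_mono ennreal_leI mult_right_mono) auto
  also have "\<dots> = a * ennreal v * ennreal (1 / w)"
    using assms by (simp add: mult.assoc flip: ennreal_mult)
  also have "\<dots> \<le> b * ennreal (1 / w)"
    using assms(1) by (rule mult_right_mono) simp
  finally show ?thesis
    by (simp add: mult.commute)
qed

lemma bounded_Delta: "bounded (Delta P r)"
proof -
  have "- r \<le> y$i \<and> y$i \<le> r" if y: "y \<in> Delta P r" for y i
  proof (cases "i \<in> P")
    case True
    have "y$i \<le> (\<Sum>j\<in>P. y$j)"
      using y True by (intro member_le_sum) (auto simp: Delta_def)
    then show ?thesis using y True by (auto simp: Delta_def)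
  next
    case False
    then show ?thesis using y by (force simp: Delta_def)
  qed
  then have "Delta P r \<subseteq> cbox (\<chi> i. -r) (\<chi> i. r)"
    by (simp add: subset_iff mem_box_cart)
  then show ?thesis by (meson bounded_cbox bounded_subset)
qed

lemma add_mem_Delta:
  assumes x: "x \<in> Delta P r'" and x_nonneg: "\<forall>i\<in>P. 0 \<le> x$i"
    and "0 \<le> t" and "t \<le> 1" and r: "(1 + t) * r' \<le> r"
    and hP: "\<And>i. i \<in> P \<Longrightarrow> \<bar>h$i\<bar> \<le> t * x$i"
    and hN: "\<And>i. i \<notin> P \<Longrightarrow> \<bar>h$i\<bar> \<le> r - r'"
  shows "x + h \<in> Delta P r"
proof -
  have "0 \<le> x$i + h$i" if "i \<in> P" for i
    using hP[OF that] x_nonneg that mult_left_le_one_le[of "x$i" t] \<open>0 \<le> t\<close> \<open>t \<le> 1\<close>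
    by (auto simp: abs_le_iff)
  moreover have "(\<Sum>i\<in>P. (x + h)$i) < r"
  proof -
    have "(\<Sum>i\<in>P. (x + h)$i) \<le> (1 + t) * (\<Sum>i\<in>P. x$i)"
      using hP by (auto simp: sum_distrib_left algebra_simps abs_le_iff intro!: sum_mono)
    also have "\<dots> < (1 + t) * r'"
      using x \<open>0 \<le> t\<close> by (simp add: Delta_def)
    finally show ?thesis using r by simp
  qed
  moreover have "- r < x$i + h$i \<and> x$i + h$i < r" if "i \<notin> P" for i
  proof -
    have "- r' < x$i \<and> x$i < r'"
      using x that by (simp add: Delta_def)
    then show ?thesis
      using hN[OF that] by (simp add: abs_le_iff)
  qed
  ultimately show ?thesis by (auto simp: Delta_def)
qed

definition Delta_box_halfwidth :: "'n::finite set \<Rightarrow> real \<Rightarrow> real \<Rightarrow> real^'n \<Rightarrow> real^'n" where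
  "Delta_box_halfwidth P r r' x = (\<chi> i. if i \<in> P then (r - r') / r' * x$i else r - r')"

lemma Delta_box_halfwidth_nonneg:
  assumes "0 < r'" and "r' \<le> r" and "\<forall>i\<in>P. 0 \<le> x$i"
  shows "0 \<le> Delta_box_halfwidth P r r' x $ i"
  using assms by (simp add: Delta_box_halfwidth_def)

lemma add_box_mem_Delta:
  assumes "r / 2 \<le> r'" and "r' < r" and x: "x \<in> Delta P r'" and x_nonneg: "\<forall>i\<in>P. 0 \<le> x$i"
    and h: "h \<in> cbox (- Delta_box_halfwidth P r r' x) (Delta_box_halfwidth P r r' x)"
  shows "x + h \<in> Delta P r"
proof (rule add_mem_Delta[OF x x_nonneg])
  let ?t = "(r - r') / r'"
  have "0 < r'"
    using assms(1,2) by linarith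
  then show "0 \<le> ?t" "?t \<le> 1" "(1 + ?t) * r' \<le> r"
    using assms(1,2) by (simp_all add: field_simps)
  have h_bound: "\<bar>h$i\<bar> \<le> Delta_box_halfwidth P r r' x $ i" for i
    using h[unfolded mem_box_cart, rule_format, of i] by (simp add: abs_le_iff)
  show "\<bar>h$i\<bar> \<le> ?t * x$i" if "i \<in> P" for i
    using h_bound[of i] that by (simp add: Delta_box_halfwidth_def)
  show "\<bar>h$i\<bar> \<le> r - r'" if "i \<notin> P" for i
    using h_bound[of i] that by (simp add: Delta_box_halfwidth_def)
qed

lemma prod_Delta_box_halfwidth:
  fixes x :: "real^'n"
  assumes "0 < r'"
  shows "(\<Prod>i\<in>UNIV. 2 * Delta_box_halfwidth P r r' x $ i)
    = 2 ^ CARD('n) * ((r - r') ^ CARD('n) * (\<Prod>i\<in>P. x$i) / r' ^ card P)"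
proof -
  have "(\<Prod>i\<in>UNIV. 2 * Delta_box_halfwidth P r r' x $ i)
      = 2 ^ CARD('n) * (((r - r') / r') ^ card P * (\<Prod>i\<in>P. x$i) * (r - r') ^ card (- P))"
    by (simp add: Delta_box_halfwidth_def prod.distrib prod.If_cases Int_def Compl_eq prod_dividef power_divide)
  also have "card (- P) = CARD('n) - card P"
    by (metis Compl_eq_Diff_UNIV card_Diff_subset finite subset_UNIV)
  finally show ?thesis
    by (simp add: power_divide card_mono power_add[symmetric])
qed

theorem mainTheorem2:
  fixes u :: "real^'n \<Rightarrow> ennreal" and P :: "'n set"
    and r r' :: real and x :: "real^'n"
  assumes "r > 0"
    and "convex_on_ennreal (Delta P r) u"
    and "r / 2 \<le> r'" and "r' < r"
    and "x \<in> Delta P r'"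
    and "\<forall>i\<in>P. x$i > 0"
  shows "u x \<le> ennreal (r' ^ card P / (r - r') ^ CARD('n))
                 * (\<integral>\<^sup>+ y \<in> Delta P r. u y \<partial>lebesgue)
                 * ennreal (1 / (\<Prod>i\<in>P. x$i))"
proof -
  note cv = assms(2) and x_pos = assms(6)
  have r'_pos: "0 < r'" and x_nonneg: "\<forall>i\<in>P. 0 \<le> x$i"
    using assms(3,4) x_pos by (auto simp: less_imp_le)
  define c where "c = Delta_box_halfwidth P r r' x"
  define w where "w = (r - r') ^ CARD('n) * (\<Prod>i\<in>P. x$i) / r' ^ card P"
  have "u x * emeasure lebesgue (cbox (- c) c) \<le> (\<integral>\<^sup>+ y \<in> Delta P r. u y \<partial>lebesgue)"
    using add_box_mem_Delta[OF assms(3-5) x_nonneg]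
    by (intro convex_on_ennreal_mult_emeasure_le_nn_integral[OF cv
          convex_on_ennreal_borel_measurable[OF cv bounded_Delta]])
       (auto simp: c_def mem_box_cart minus_le_iff)
  then have "u x * ennreal (2 ^ CARD('n) * w) \<le> (\<integral>\<^sup>+ y \<in> Delta P r. u y \<partial>lebesgue)"
    unfolding c_def w_def prod_Delta_box_halfwidth[OF r'_pos, symmetric]
      emeasure_lebesgue_cbox_cart_symmetric[OF
        Delta_box_halfwidth_nonneg[OF r'_pos less_imp_le[OF assms(4)] x_nonneg]] .
  moreover have "0 < w"
    using assms(4) r'_pos x_pos by (simp add: w_def prod_pos)
  ultimately have "u x \<le> ennreal (1 / w) * (\<integral>\<^sup>+ y \<in> Delta P r. u y \<partial>lebesgue)"
    by (intro ennreal_le_divide_of_mult_le) (auto simp: mult_le_cancel_right1)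
  also have "ennreal (1 / w) = ennreal (r' ^ card P / (r - r') ^ CARD('n)) * ennreal (1 / (\<Prod>i\<in>P. x$i))"
    using assms(4) r'_pos x_nonneg
    by (subst ennreal_mult[symmetric]) (auto simp: w_def prod_nonneg)
  finally show ?thesis
    by (simp only: mult_ac)
qed

end
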